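(* The generating function of $\alpha$-unimodal sets satisfies $$F(q,t,z):=\sum_{n\ge1}\sum_{\alpha\vDash n}\sum_{S\in U_\alpha} q^{|S|}\,t^{\ell(\alpha)}\,z^n = \frac{tz}{1-(1+q)(1+t)z+qz^2}$$ as formal power series.
   Context: A composition $\alpha=(\alpha_1,\dots,\alpha_\ell)$ of $n$ (written $\alpha\vDash n$) is a sequence of positive integers summing to $n$; $\ell(\alpha)=\ell$ is its number of parts. Set $S_\alpha=\{\alpha_1,\alpha_1+\alpha_2,\dots,\alpha_1+\dots+\alpha_{\ell-1}\}\subseteq[n-1]$. The blocks of $\alpha$ are $B_i(\alpha)=\{\alpha_1+\dots+\alpha_{i-1}+1,\dots,\alpha_1+\dots+\alpha_i\}$. A set $S\subseteq[n-1]$ is $\alpha$-unimodal if for every $i$ the set $S\cap(B_i(\alpha)\setminus S_\alpha)$ is an initial segment (in increasing order) of $B_i(\alpha)\setminus S_\alpha$. $U_\alpha$ denotes the set of $\alpha$-unimodal subsets of $[n-1]$. *)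

theory Defs
  imports "HOL-Computational_Algebra.Formal_Power_Series"
begin

definition compositions :: "nat \<Rightarrow> nat list set" where
  "compositions n = {\<alpha>. (\<forall>a\<in>set \<alpha>. 0 < a) \<and> sum_list \<alpha> = n}"

definition partial_sums_set :: "nat list \<Rightarrow> nat set" where
  "partial_sums_set \<alpha> = {sum_list (take i \<alpha>) | i. 1 \<le> i \<and> i \<le> length \<alpha> - 1}"

text \<open>Block i (0-indexed, i < length alpha) =
  {alpha_1+...+alpha_(i-1)+1, ..., alpha_1+...+alpha_i} in 1-indexed notation.\<close>
definition block :: "nat list \<Rightarrow> nat \<Rightarrow> nat set" where
  "block \<alpha> i = {sum_list (take i \<alpha>) + 1 .. sum_list (take (Suc i) \<alpha>)}"

definition is_init_seg :: "nat set \<Rightarrow> nat set \<Rightarrow> bool" where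
  "is_init_seg T U \<longleftrightarrow> T \<subseteq> U \<and> (\<forall>x\<in>U. \<forall>y\<in>T. x < y \<longrightarrow> x \<in> T)"

definition alpha_unimodal :: "nat list \<Rightarrow> nat set \<Rightarrow> bool" where
  "alpha_unimodal \<alpha> S \<longleftrightarrow>
     S \<subseteq> {1..<sum_list \<alpha>} \<and>
     (\<forall>i < length \<alpha>. is_init_seg (S \<inter> (block \<alpha> i - partial_sums_set \<alpha>))
                                          (block \<alpha> i - partial_sums_set \<alpha>))"

definition unimodal_sets :: "nat list \<Rightarrow> nat set set" where
  "unimodal_sets \<alpha> = {S. alpha_unimodal \<alpha> S}"

definition F_series :: "'a::comm_ring_1 \<Rightarrow> 'a \<Rightarrow> 'a fps" where
  "F_series q t = Abs_fps (\<lambda>n. if n = 0 then 0 else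
      (\<Sum>\<alpha>\<in>compositions n. \<Sum>S\<in>unimodal_sets \<alpha>. q ^ card S * t ^ length \<alpha>))"

end

theory Submission
  imports Defs
begin

text \<open>
  A set \<open>S\<close> is \<open>\<alpha>\<close>-unimodal iff its trace on each block, with the block's right end removed,
  is an initial segment; the right ends (the partial sums) are unconstrained. Splitting off the
  last part \<open>a\<close> of \<open>\<alpha> = \<beta>a\<close> therefore multiplies \<open>\<Sum>\<^sub>S q\<^bsup>|S|\<^esup>\<close> by \<open>(1 + q)[a]\<^sub>q\<close>: the factor \<open>1 + q\<close>
  decides whether the new partial sum \<open>|\<beta>|\<close> lies in \<open>S\<close>, and \<open>[a]\<^sub>q = 1 + q + \<dots> + q\<^bsup>a-1\<^esup>\<close>
  counts the initial segments of the last block. A one-part composition contributes \<open>[a]\<^sub>q\<close>.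
  With \<open>G = \<Sum>\<^sub>a [a]\<^sub>q z\<^sup>a = z/((1 - z)(1 - qz))\<close> this gives \<open>F = tG + (1 + q)tGF\<close>, which solves to
  the stated rational function.
\<close>

unbundle fps_syntax

lemma is_init_seg_atLeastLessThan_iff:
  "is_init_seg T {l..<r} \<longleftrightarrow> (\<exists>k\<le>r-l. T = {l..<l+k})"
proof
  assume seg: "is_init_seg T {l..<r}"
  show "\<exists>k\<le>r-l. T = {l..<l+k}"
  proof (cases "T = {}")
    case True
    then show ?thesis by (intro exI[of _ 0]) auto
  next
    case False
    have sub: "T \<subseteq> {l..<r}"
      and closed: "\<And>x y. x \<in> {l..<r} \<Longrightarrow> y \<in> T \<Longrightarrow> x < y \<Longrightarrow> x \<in> T"
      using seg by (auto simp: is_init_seg_def)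
    define M where "M = Max T"
    have "finite T" using sub finite_subset by blast
    then have M: "M \<in> T" "\<And>y. y \<in> T \<Longrightarrow> y \<le> M"
      using False by (auto simp: M_def)
    have "M < r" using M sub by auto
    have "T = {l..<l + (Suc M - l)}"
    proof (intro set_eqI iffI)
      fix x assume "x \<in> {l..<l + (Suc M - l)}"
      with \<open>M < r\<close> M(1) show "x \<in> T"
        using closed[of x M] by (cases "x = M") auto
    qed (use sub M in fastforce)
    moreover have "Suc M - l \<le> r - l" using \<open>M < r\<close> by simp
    ultimately show ?thesis by blast
  qed
qed (auto simp: is_init_seg_def)

lemma is_init_seg_last_block_iff:
  assumes "S \<subseteq> {1..<m+a}" "1 \<le> a"
  shows "is_init_seg (S \<inter> {m+1..m+a}) {m+1..m+a} \<longleftrightarrow>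
    (\<exists>k<a. S \<inter> {m+1..m+a} = {m+1..<m+1+k})"
proof -
  let ?T = "S \<inter> {m+1..m+a}"
  have ivl: "{m+1..<m+1+a} = {m+1..m+a}" by auto
  have "m + a \<notin> S" using assms(1) by auto
  then have "?T \<noteq> {m+1..<m+1+a}" using assms(2) by auto
  moreover have "is_init_seg ?T {m+1..m+a} \<longleftrightarrow> (\<exists>k\<le>a. ?T = {m+1..<m+1+k})"
    using is_init_seg_atLeastLessThan_iff[of ?T "m+1" "m+1+a", unfolded ivl] by simp
  ultimately show ?thesis by (metis le_less)
qed

lemma sum_list_take_le: "sum_list (take i xs) \<le> sum_list (xs :: nat list)"
  by (metis append_take_drop_id le_add1 sum_list_append)

lemma partial_sums_set_le: "x \<in> partial_sums_set \<beta> \<Longrightarrow> x \<le> sum_list \<beta>"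
  unfolding partial_sums_set_def using sum_list_take_le by auto

lemma block_subset: "block \<beta> i \<subseteq> {1..sum_list \<beta>}"
  unfolding block_def using sum_list_take_le[of "Suc i" \<beta>] by auto

lemma partial_sums_set_eq_image:
  "partial_sums_set \<alpha> = (\<lambda>i. sum_list (take i \<alpha>)) ` {1..length \<alpha> - 1}"
  by (auto simp: partial_sums_set_def)

lemma partial_sums_set_snoc:
  assumes "\<beta> \<noteq> []"
  shows "partial_sums_set (\<beta> @ [a]) = insert (sum_list \<beta>) (partial_sums_set \<beta>)"
proof -
  have "partial_sums_set (\<beta> @ [a]) = (\<lambda>i. sum_list (take i \<beta>)) ` {1..length \<beta>}"
    unfolding partial_sums_set_eq_image by (intro image_cong) auto
  also have "{1..length \<beta>} = insert (length \<beta>) {1..length \<beta> - 1}"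
    using assms by (auto simp: Suc_le_eq)
  finally show ?thesis by (simp add: partial_sums_set_eq_image)
qed

lemma block_snoc: "i < length \<beta> \<Longrightarrow> block (\<beta> @ [a]) i = block \<beta> i"
  by (simp add: block_def)

lemma block_snoc_last: "block (\<beta> @ [a]) (length \<beta>) = {sum_list \<beta> + 1 .. sum_list \<beta> + a}"
  by (simp add: block_def)

lemma is_init_seg_Diff_upper_bound:
  assumes "m \<notin> T" "\<forall>u\<in>U. u \<le> m"
  shows "is_init_seg T (U - {m}) \<longleftrightarrow> is_init_seg T U"
  unfolding is_init_seg_def
proof safe
  fix x y
  assume "\<forall>x\<in>U - {m}. \<forall>y\<in>T. x < y \<longrightarrow> x \<in> T" "T \<subseteq> U - {m}" "x \<in> U" "y \<in> T" "x < y"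
  moreover have "x \<noteq> m" using assms \<open>T \<subseteq> U - {m}\<close> \<open>y \<in> T\<close> \<open>x < y\<close> by force
  ultimately show "x \<in> T" by blast
qed (use assms in auto)

lemma alpha_unimodal_snoc:
  assumes "\<beta> \<noteq> []"
  defines "m \<equiv> sum_list \<beta>"
  shows "alpha_unimodal (\<beta> @ [a]) S \<longleftrightarrow>
     S \<subseteq> {1..<m+a} \<and> alpha_unimodal \<beta> (S \<inter> {1..<m}) \<and>
     is_init_seg (S \<inter> {m+1..m+a}) {m+1..m+a}"
proof -
  let ?P = "partial_sums_set \<beta>"
  have P: "partial_sums_set (\<beta> @ [a]) = insert m ?P"
    using partial_sums_set_snoc[OF assms(1)] by (simp add: m_def)
  have old_blocks:
    "is_init_seg (S \<inter> (block (\<beta> @ [a]) i - partial_sums_set (\<beta> @ [a])))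
                 (block (\<beta> @ [a]) i - partial_sums_set (\<beta> @ [a]))
     \<longleftrightarrow> is_init_seg (S \<inter> {1..<m} \<inter> (block \<beta> i - ?P)) (block \<beta> i - ?P)"
    if "i < length \<beta>" for i
  proof -
    let ?U = "block \<beta> i - ?P"
    have B: "?U \<subseteq> {1..m}" using block_subset[of \<beta> i] by (auto simp: m_def)
    then have U: "\<forall>u\<in>?U. u \<le> m" by auto
    have "block (\<beta> @ [a]) i - partial_sums_set (\<beta> @ [a]) = ?U - {m}"
      using block_snoc[OF that] P by auto
    moreover have "S \<inter> (?U - {m}) = S \<inter> {1..<m} \<inter> ?U"
      using B by auto
    ultimately show ?thesis
      using is_init_seg_Diff_upper_bound[OF _ U, of "S \<inter> {1..<m} \<inter> ?U"] by simp
  qed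
  have last_block: "block (\<beta> @ [a]) (length \<beta>) - partial_sums_set (\<beta> @ [a]) = {m+1..m+a}"
    using block_snoc_last P partial_sums_set_le by (fastforce simp: m_def)
  have "sum_list (\<beta> @ [a]) = m + a" by (simp add: m_def)
  then show ?thesis
    unfolding alpha_unimodal_def by (simp add: All_less_Suc old_blocks last_block conj_ac)
qed

lemma sum_product_triple:
  "(\<Sum>(x, y, z)\<in>A \<times> B \<times> C. f x * (g y * h z)) = sum f A * (sum g B * (sum h C :: 'a::comm_semiring_0))"
proof -
  have "sum g B * sum h C = (\<Sum>(y, z)\<in>B \<times> C. g y * h z)"
    by (simp add: sum_product sum.cartesian_product)
  then show ?thesis
    by (simp add: sum_product sum.cartesian_product case_prod_unfold)
qed

definition q_int :: "'a::comm_ring_1 \<Rightarrow> nat \<Rightarrow> 'a" where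
  "q_int q a = (\<Sum>k<a. q ^ k)"

lemma q_int_0 [simp]: "q_int q 0 = 0"
  by (simp add: q_int_def)

lemma q_int_Suc: "q_int q (Suc m) = 1 + q * q_int q m"
  unfolding q_int_def sum.lessThan_Suc_shift by (simp add: sum_distrib_left)

definition unimodal_weight :: "'a::comm_ring_1 \<Rightarrow> nat list \<Rightarrow> 'a" where
  "unimodal_weight q \<alpha> = (\<Sum>S\<in>unimodal_sets \<alpha>. q ^ card S)"

lemma unimodal_sets_subset: "S \<in> unimodal_sets \<alpha> \<Longrightarrow> S \<subseteq> {1..<sum_list \<alpha>}"
  by (simp add: unimodal_sets_def alpha_unimodal_def)

lemma unimodal_sets_single:
  assumes "1 \<le> a"
  shows "unimodal_sets [a] = (\<lambda>k. {1..<Suc k}) ` {..<a}"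
proof (intro set_eqI)
  fix S
  have "S \<in> unimodal_sets [a] \<longleftrightarrow> S \<subseteq> {1..<a} \<and> is_init_seg (S \<inter> {1..a}) {1..a}"
    by (simp add: unimodal_sets_def alpha_unimodal_def partial_sums_set_def block_def)
  also have "\<dots> \<longleftrightarrow> S \<subseteq> {1..<a} \<and> (\<exists>k<a. S \<inter> {1..a} = {1..<Suc k})"
    using is_init_seg_last_block_iff[of S 0 a] assms by auto
  also have "\<dots> \<longleftrightarrow> (\<exists>k<a. S = {1..<Suc k})"
    by (fastforce simp: Int_absorb2)
  finally show "S \<in> unimodal_sets [a] \<longleftrightarrow> S \<in> (\<lambda>k. {1..<Suc k}) ` {..<a}"
    by auto
qed

lemma unimodal_weight_single: "1 \<le> a \<Longrightarrow> unimodal_weight q [a] = q_int q a"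
  unfolding unimodal_weight_def q_int_def unimodal_sets_single
  by (subst sum.reindex) (auto intro: inj_on_inverseI[of _ card])

text \<open>In \<open>glue_last_part m (S, b, k)\<close>, \<open>b\<close> records whether the partial sum \<open>m\<close> is taken and \<open>k\<close> is
  the length of the initial segment taken from the last block.\<close>

definition glue_last_part :: "nat \<Rightarrow> nat set \<times> bool \<times> nat \<Rightarrow> nat set" where
  "glue_last_part m = (\<lambda>(S, b, k). S \<union> (if b then {m} else {}) \<union> {m+1..<m+1+k})"

lemma inj_on_glue_last_part: "inj_on (glue_last_part m) (Pow {..<m} \<times> UNIV \<times> UNIV)"
proof (rule inj_on_inverseI)
  fix x assume "x \<in> Pow {..<m} \<times> (UNIV :: bool set) \<times> (UNIV :: nat set)"
  then obtain S b k where x: "x = (S, b, k)" and S: "S \<subseteq> {..<m}" by auto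
  have "glue_last_part m x \<inter> {..<m} = S" "glue_last_part m x \<inter> {m<..} = {m+1..<m+1+k}"
    using S by (auto simp: x glue_last_part_def)
  moreover have "m \<in> glue_last_part m x \<longleftrightarrow> b"
    using S by (auto simp: x glue_last_part_def)
  ultimately show "(\<lambda>T. (T \<inter> {..<m}, m \<in> T, card (T \<inter> {m<..}))) (glue_last_part m x) = x"
    by (simp add: x)
qed

lemma card_glue_last_part:
  assumes "finite S" "S \<subseteq> {..<m}"
  shows "card (glue_last_part m (S, b, k)) = card S + of_bool b + k"
proof -
  have "m \<notin> S" using assms(2) by auto
  then have "card (S \<union> (if b then {m} else {})) = card S + of_bool b"
    using assms(1) by (cases b) auto
  moreover have "card (glue_last_part m (S, b, k)) = card (S \<union> (if b then {m} else {})) + card {m+1..<m+1+k}"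
    unfolding glue_last_part_def prod.case using assms by (intro card_Un_disjoint) auto
  ultimately show ?thesis by simp
qed

lemma unimodal_sets_snoc:
  assumes "\<beta> \<noteq> []" "1 \<le> sum_list \<beta>" "1 \<le> a"
  shows "unimodal_sets (\<beta> @ [a]) =
    glue_last_part (sum_list \<beta>) ` (unimodal_sets \<beta> \<times> UNIV \<times> {..<a})"
proof (intro set_eqI iffI)
  let ?m = "sum_list \<beta>"
  have char: "S \<in> unimodal_sets (\<beta> @ [a]) \<longleftrightarrow> S \<subseteq> {1..<?m+a} \<and> S \<inter> {1..<?m} \<in> unimodal_sets \<beta> \<and>
     is_init_seg (S \<inter> {?m+1..?m+a}) {?m+1..?m+a}" for S
    using alpha_unimodal_snoc[OF assms(1)] by (simp add: unimodal_sets_def)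
  fix S
  {
    assume "S \<in> unimodal_sets (\<beta> @ [a])"
    then have S: "S \<subseteq> {1..<?m+a}" "S \<inter> {1..<?m} \<in> unimodal_sets \<beta>"
      "is_init_seg (S \<inter> {?m+1..?m+a}) {?m+1..?m+a}"
      using char by auto
    then obtain k where "k < a" "S \<inter> {?m+1..?m+a} = {?m+1..<?m+1+k}"
      using is_init_seg_last_block_iff[OF S(1) assms(3)] by blast
    moreover have "S = (S \<inter> {1..<?m}) \<union> (if ?m \<in> S then {?m} else {}) \<union> (S \<inter> {?m+1..?m+a})"
    proof (rule set_eqI)
      fix x
      show "x \<in> S \<longleftrightarrow> x \<in> (S \<inter> {1..<?m}) \<union> (if ?m \<in> S then {?m} else {}) \<union> (S \<inter> {?m+1..?m+a})"
        using subsetD[OF S(1), of x] by (cases "x < ?m"; cases "x = ?m") auto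
    qed
    ultimately have "S = glue_last_part ?m (S \<inter> {1..<?m}, ?m \<in> S, k)"
      by (simp add: glue_last_part_def)
    with S(2) \<open>k < a\<close> show "S \<in> glue_last_part ?m ` (unimodal_sets \<beta> \<times> UNIV \<times> {..<a})"
      by blast
  next
    assume "S \<in> glue_last_part ?m ` (unimodal_sets \<beta> \<times> UNIV \<times> {..<a})"
    then obtain S' b k where S': "S' \<in> unimodal_sets \<beta>" "k < a" "S = glue_last_part ?m (S', b, k)"
      by auto
    have "S' \<subseteq> {1..<?m}" using unimodal_sets_subset[OF S'(1)] .
    then have S_sub: "S \<subseteq> {1..<?m+a}" and S_init: "S \<inter> {1..<?m} = S'"
      and S_last: "S \<inter> {?m+1..?m+a} = {?m+1..<?m+1+k}"
      using S'(2,3) assms(2) by (auto simp: glue_last_part_def)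
    moreover have "is_init_seg (S \<inter> {?m+1..?m+a}) {?m+1..?m+a}"
      using is_init_seg_last_block_iff[OF S_sub assms(3)] S_last S'(2) by blast
    ultimately show "S \<in> unimodal_sets (\<beta> @ [a])"
      using char S'(1) by simp
  }
qed

lemma unimodal_weight_snoc:
  assumes "\<beta> \<noteq> []" "1 \<le> sum_list \<beta>" "1 \<le> a"
  shows "unimodal_weight q (\<beta> @ [a]) = (1 + q) * q_int q a * unimodal_weight q \<beta>"
proof -
  let ?D = "unimodal_sets \<beta> \<times> UNIV \<times> {..<a}"
  have sub: "unimodal_sets \<beta> \<subseteq> Pow {..<sum_list \<beta>}"
    using unimodal_sets_subset by fastforce
  have inj: "inj_on (glue_last_part (sum_list \<beta>)) ?D"
    by (rule inj_on_subset[OF inj_on_glue_last_part]) (use sub in auto)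
  have "unimodal_weight q (\<beta> @ [a]) = (\<Sum>(S, b, k)\<in>?D. q ^ card S * (q ^ of_bool b * q ^ k))"
    unfolding unimodal_weight_def unimodal_sets_snoc[OF assms] sum.reindex[OF inj]
    using sub by (intro sum.cong) (auto simp: card_glue_last_part power_add finite_subset)
  also have "\<dots> = (\<Sum>S\<in>unimodal_sets \<beta>. q ^ card S) * ((\<Sum>b\<in>UNIV. q ^ of_bool b) * (\<Sum>k<a. q ^ k))"
    by (rule sum_product_triple)
  also have "\<dots> = (1 + q) * q_int q a * unimodal_weight q \<beta>"
    by (simp add: UNIV_bool q_int_def unimodal_weight_def mult_ac)
  finally show ?thesis .
qed

lemma length_le_sum_list: "\<forall>a\<in>set \<alpha>. 0 < (a::nat) \<Longrightarrow> length \<alpha> \<le> sum_list \<alpha>"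
  by (induction \<alpha>) auto

lemma finite_compositions: "finite (compositions n)"
proof (rule finite_subset)
  show "compositions n \<subseteq> {xs. set xs \<subseteq> {0..n} \<and> length xs \<le> n}"
    unfolding compositions_def using length_le_sum_list member_le_sum_list by fastforce
  show "finite {xs. set xs \<subseteq> {0..n} \<and> length xs \<le> n}"
    by (rule finite_lists_length_le) simp
qed

lemma compositions_eq_insert_snoc:
  assumes "1 \<le> n"
  shows "compositions n =
    insert [n] ((\<lambda>(a, \<beta>). \<beta> @ [a]) ` Sigma {1..<n} (\<lambda>a. compositions (n - a)))"
proof (intro set_eqI iffI)
  fix \<alpha> assume "\<alpha> \<in> compositions n"
  then have pos: "\<forall>a\<in>set \<alpha>. 0 < a" and sum: "sum_list \<alpha> = n"
    by (auto simp: compositions_def)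
  then have "\<alpha> \<noteq> []" using assms by auto
  then obtain \<beta> a where \<alpha>: "\<alpha> = \<beta> @ [a]" by (metis rev_exhaust)
  show "\<alpha> \<in> insert [n] ((\<lambda>(a, \<beta>). \<beta> @ [a]) ` Sigma {1..<n} (\<lambda>a. compositions (n - a)))"
  proof (cases "\<beta> = []")
    case True
    then show ?thesis using \<alpha> sum by simp
  next
    case False
    then obtain b where "b \<in> set \<beta>" by (meson list.set_sel(1))
    then have "0 < sum_list \<beta>"
      using pos \<alpha> member_le_sum_list[of b \<beta>] by fastforce
    then have "a \<in> {1..<n}" "\<beta> \<in> compositions (n - a)"
      using sum \<alpha> pos by (auto simp: compositions_def)
    then show ?thesis using \<alpha> by force
  qed
qed (use assms in \<open>auto simp: compositions_def\<close>)

definition composition_sum :: "'a::comm_ring_1 \<Rightarrow> 'a \<Rightarrow> nat \<Rightarrow> 'a" where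
  "composition_sum q t n = (\<Sum>\<alpha>\<in>compositions n. t ^ length \<alpha> * unimodal_weight q \<alpha>)"

lemma fps_nth_F_series: "F_series q t $ n = (if n = 0 then 0 else composition_sum q t n)"
  unfolding F_series_def composition_sum_def unimodal_weight_def
  by (simp add: sum_distrib_left mult.commute)

lemma composition_sum_rec:
  assumes "1 \<le> n"
  shows "composition_sum q t n =
    t * q_int q n + (1 + q) * t * (\<Sum>a\<in>{1..<n}. q_int q a * composition_sum q t (n - a))"
proof -
  let ?snoc = "\<lambda>(a, \<beta>). \<beta> @ [a]"
  let ?D = "Sigma {1..<n} (\<lambda>a. compositions (n - a))"
  let ?w = "\<lambda>\<alpha>. t ^ length \<alpha> * unimodal_weight q \<alpha>"
  have inj: "inj_on ?snoc ?D" by (auto simp: inj_on_def)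
  have "[n] \<notin> ?snoc ` ?D" by auto
  then have "composition_sum q t n = ?w [n] + sum ?w (?snoc ` ?D)"
    unfolding composition_sum_def compositions_eq_insert_snoc[OF assms]
    by (simp add: finite_compositions)
  also have "?w [n] = t * q_int q n"
    by (simp add: unimodal_weight_single[OF assms])
  also have "sum ?w (?snoc ` ?D) = (\<Sum>a\<in>{1..<n}. \<Sum>\<beta>\<in>compositions (n - a). ?w (\<beta> @ [a]))"
    unfolding sum.reindex[OF inj]
    by (subst sum.Sigma) (auto simp: finite_compositions case_prod_unfold)
  also have "\<dots> = (\<Sum>a\<in>{1..<n}. \<Sum>\<beta>\<in>compositions (n - a). (1 + q) * t * (q_int q a * ?w \<beta>))"
  proof (intro sum.cong refl)
    fix a \<beta> assume "a \<in> {1..<n}" "\<beta> \<in> compositions (n - a)"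
    then have "\<beta> \<noteq> []" "1 \<le> sum_list \<beta>" "1 \<le> a"
      by (auto simp: compositions_def)
    then show "?w (\<beta> @ [a]) = (1 + q) * t * (q_int q a * ?w \<beta>)"
      by (simp add: unimodal_weight_snoc algebra_simps)
  qed
  also have "\<dots> = (1 + q) * t * (\<Sum>a\<in>{1..<n}. q_int q a * composition_sum q t (n - a))"
    by (simp add: composition_sum_def sum_distrib_left)
  finally show ?thesis .
qed

lemma F_series_eq:
  "F_series q t = fps_const t * Abs_fps (q_int q) +
     fps_const ((1 + q) * t) * (Abs_fps (q_int q) * F_series q t)"
proof (rule fps_ext)
  fix n
  show "F_series q t $ n = (fps_const t * Abs_fps (q_int q) +
     fps_const ((1 + q) * t) * (Abs_fps (q_int q) * F_series q t)) $ n"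
  proof (cases "n = 0")
    case True
    then show ?thesis by (simp add: fps_nth_F_series)
  next
    case False
    have "(Abs_fps (q_int q) * F_series q t) $ n = (\<Sum>i=0..n. q_int q i * F_series q t $ (n - i))"
      by (simp add: fps_mult_nth)
    also have "\<dots> = (\<Sum>i\<in>{1..<n}. q_int q i * composition_sum q t (n - i))"
      by (rule sum.mono_neutral_cong_right) (auto simp: fps_nth_F_series not_less_eq_eq)
    finally show ?thesis
      using composition_sum_rec[of n q t] False by (simp add: fps_nth_F_series)
  qed
qed

lemma q_int_fps_times_denominator:
  "Abs_fps (q_int q) * ((1 - fps_X) * (1 - fps_const q * fps_X)) = fps_X"
proof -
  let ?E = "Abs_fps (\<lambda>n. of_bool (n \<noteq> 0)) :: 'a fps"
  have "Abs_fps (q_int q) * ((1 - fps_X) * (1 - fps_const q * fps_X)) =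
      Abs_fps (q_int q) * (1 - fps_const q * fps_X) * (1 - fps_X)"
    by (simp add: mult_ac)
  also have "Abs_fps (q_int q) * (1 - fps_const q * fps_X) = ?E"
  proof (rule fps_ext)
    fix n
    show "(Abs_fps (q_int q) * (1 - fps_const q * fps_X)) $ n = ?E $ n"
      by (cases n) (simp_all add: algebra_simps q_int_Suc)
  qed
  also have "?E * (1 - fps_X) = ?E - fps_X * ?E"
    by (simp add: algebra_simps)
  also have "\<dots> = fps_X"
    by (rule fps_ext) (simp add: fps_X_nth)
  finally show ?thesis .
qed

theorem proposition2p1:
  fixes q t :: "'a::field"
  shows "F_series q t =
    fps_const t * fps_X /
      (1 - fps_const ((1 + q) * (1 + t)) * fps_X + fps_const q * fps_X ^ 2)"
proof -
  let ?F = "F_series q t" and ?G = "Abs_fps (q_int q)"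
  let ?D = "1 - fps_const ((1 + q) * (1 + t)) * fps_X + fps_const q * fps_X ^ 2 :: 'a fps"
  have D: "?D = (1 - fps_X) * (1 - fps_const q * fps_X) - fps_const ((1 + q) * t) * fps_X"
    by (simp add: algebra_simps power2_eq_square flip: fps_const_mult fps_const_add)
  have D_nth_0: "?D $ 0 = 1" by simp
  have "?F * ((1 - fps_X) * (1 - fps_const q * fps_X)) =
      (fps_const t + fps_const ((1 + q) * t) * ?F) * (?G * ((1 - fps_X) * (1 - fps_const q * fps_X)))"
    by (subst F_series_eq) (simp add: algebra_simps flip: fps_const_mult fps_const_add)
  then have "?F * ?D = fps_const t * fps_X"
    unfolding D q_int_fps_times_denominator by (simp add: algebra_simps flip: fps_const_mult fps_const_add)
  moreover have "?D \<noteq> 0"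
    by (metis fps_zero_nth zero_neq_one D_nth_0)
  ultimately show ?thesis
    by (metis nonzero_mult_div_cancel_right)
qed

end
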